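(* Let $\rho\in\mathbb N\cup\{\infty\}$ and let $D$ be a Van Kampen diagram over $X_\rho$ all of whose clusters are simply connected, non-complicated, and standardly filled. Then $\|D_{\mathrm{thick}}\|_\infty\le 6\,\mathrm{Area}(D)$.
   Context: Setting. $G=\langle S\mid\mathcal R\rangle$ is a finite presentation with $S$ finite symmetric and relators of length 2 or 3. $H_1,\dots,H_n\le G$, and $S_i\subset S$ is a finite symmetric generating set of $H_i$. Truncated relative presentation. For $\rho\in\mathbb N\cup\{\infty\}$, $\tilde H_i=\langle\tilde S_i\mid$ words of length $\le\rho$ over $S_i$ trivial in $H_i\rangle$, with $\tilde S_i$ a copy of $S_i$ and natural epimorphism $p_i$. Put $\hat S=S\sqcup\tilde H_1\sqcup\dots\sqcup\tilde H_n$, each element of $\tilde H_i$ being a letter. $X_\rho$ is the presentation of $G$ with generators $\hat S$ and relators: - $\mathcal R'$, consisting of $\mathcal R$ together with the words $\tilde s^{-1}p_i(\tilde s)$ for $\tilde s\in\tilde S_i$; - for each $i$, all words of at most 3 letters of $\tilde H_i$ with trivial product in $\tilde H_i$. Complexity. $\|s\|=1$ for $s\in S$. For $a\in\tilde H_i$, $\|a\|$ is the word length with respect to $\tilde S_i$. $\|\cdot\|_\infty$ of a subcomplex is the maximum edge-label complexity. $\mathrm{Area}(D)$ is the number of 2-cells. $D_{\mathrm{thick}}$ is the union of all 2-cells of $D$ and of all edges and vertices contained in the boundary of some 2-cell. Clusters. 2-cells have type $\mathcal R'$ or $\tilde H_i$ according to their relator. Cells of the same type $\tilde H_i$ sharing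 an edge are cluster-adjacent. A cluster is the closure of a class of the transitive closure of this relation. $\partial C$ is the union of the edges of $C$ lying in exactly one 2-cell of $C$. A cluster $C$ is complicated if $\partial C\cap\partial D$ contains at least two edges. A simply connected cluster with boundary labeled cyclically $a_1,\dots,a_m$ is standardly filled if it is the fan triangulation with $m-2$ triangles, all vertices on $\partial C$, and interior edges labeled by $a_1\cdots a_j\in\tilde H_i$ for $j\le m-2$. *)

theory Defs
  imports "HOL-Algebra.Algebra" "HOL-Library.Extended_Nat"
begin

text \<open>A signed word: a letter together with True (the letter) or False (its formal inverse).\<close>
type_synonym 'a sword = "('a \<times> bool) list"

definition pos_word :: "'a list \<Rightarrow> 'a sword" where
  "pos_word w = map (\<lambda>x. (x, True)) w"

definition inv_sw :: "'a sword \<Rightarrow> 'a sword" where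
  "inv_sw w = rev (map (\<lambda>(x,b). (x, \<not> b)) w)"

inductive_set pres_step :: "'a set \<Rightarrow> 'a sword set \<Rightarrow> ('a sword \<times> 'a sword) set"
  for A :: "'a set" and Rs :: "'a sword set" where
  cancel: "x \<in> A \<Longrightarrow> (u @ [(x,b),(x,\<not>b)] @ v, u @ v) \<in> pres_step A Rs"
| relator: "r \<in> Rs \<Longrightarrow> (u @ r @ v, u @ v) \<in> pres_step A Rs"
| relator_inv: "r \<in> Rs \<Longrightarrow> (u @ inv_sw r @ v, u @ v) \<in> pres_step A Rs"

definition pres_eq :: "'a set \<Rightarrow> 'a sword set \<Rightarrow> ('a sword \<times> 'a sword) set" where
  "pres_eq A Rs = {(u,v). u \<in> lists (A \<times> UNIV) \<and> v \<in> lists (A \<times> UNIV) \<and>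
      (u,v) \<in> (pres_step A Rs \<union> (pres_step A Rs)\<inverse>)\<^sup>*}"

definition sw_prod :: "('g, 'b) monoid_scheme \<Rightarrow> 'g sword \<Rightarrow> 'g" where
  "sw_prod G w = foldr (\<lambda>(x,b) y. (if b then x else inv\<^bsub>G\<^esub> x) \<otimes>\<^bsub>G\<^esub> y) w \<one>\<^bsub>G\<^esub>"

definition sym_subset :: "('g, 'b) monoid_scheme \<Rightarrow> 'g set \<Rightarrow> bool" where
  "sym_subset G A \<longleftrightarrow> (\<forall>x\<in>A. inv\<^bsub>G\<^esub> x \<in> A)"

definition finite_presentation :: "('g, 'b) monoid_scheme \<Rightarrow> 'g set \<Rightarrow> 'g list set \<Rightarrow> bool" where
  "finite_presentation G S R \<longleftrightarrow>
     group G \<and> finite S \<and> S \<subseteq> carrier G \<and> sym_subset G S \<and> finite R \<and>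
     (\<forall>r\<in>R. set r \<subseteq> S \<and> (length r = 2 \<or> length r = 3) \<and> sw_prod G (pos_word r) = \<one>\<^bsub>G\<^esub>) \<and>
     generate G S = carrier G \<and>
     (\<forall>w\<in>lists (S \<times> UNIV). sw_prod G w = \<one>\<^bsub>G\<^esub> \<longrightarrow> (w, []) \<in> pres_eq S (pos_word ` R))"

text \<open>Relators of \<open>\<tilde>H_i\<close>: words of length at most rho over \<open>S_i\<close> trivial in \<open>H_i\<close> (i.e. in G).
  The generator \<open>\<tilde>s\<close> of \<open>\<tilde>H_i\<close> is represented by s itself.\<close>
definition tRel :: "('g, 'b) monoid_scheme \<Rightarrow> (nat \<Rightarrow> 'g set) \<Rightarrow> enat \<Rightarrow> nat \<Rightarrow> 'g sword set" where
  "tRel G Ss rho i = {pos_word w | w. w \<in> lists (Ss i) \<and> enat (length w) \<le> rho \<and>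
                                   sw_prod G (pos_word w) = \<one>\<^bsub>G\<^esub>}"

definition tEq :: "('g, 'b) monoid_scheme \<Rightarrow> (nat \<Rightarrow> 'g set) \<Rightarrow> enat \<Rightarrow> nat \<Rightarrow> ('g sword \<times> 'g sword) set" where
  "tEq G Ss rho i = pres_eq (Ss i) (tRel G Ss rho i)"

text \<open>Elements of \<open>\<tilde>H_i\<close> are equivalence classes of signed words over \<open>\<tilde>S_i\<close>.\<close>
definition tcarrier :: "('g, 'b) monoid_scheme \<Rightarrow> (nat \<Rightarrow> 'g set) \<Rightarrow> enat \<Rightarrow> nat \<Rightarrow> 'g sword set set" where
  "tcarrier G Ss rho i = lists (Ss i \<times> UNIV) // tEq G Ss rho i"

definition tclass :: "('g, 'b) monoid_scheme \<Rightarrow> (nat \<Rightarrow> 'g set) \<Rightarrow> enat \<Rightarrow> nat \<Rightarrow> 'g sword \<Rightarrow> 'g sword set" where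
  "tclass G Ss rho i w = tEq G Ss rho i `` {w}"

definition tprod :: "('g, 'b) monoid_scheme \<Rightarrow> (nat \<Rightarrow> 'g set) \<Rightarrow> enat \<Rightarrow> nat \<Rightarrow> 'g sword set list \<Rightarrow> 'g sword set" where
  "tprod G Ss rho i as = tEq G Ss rho i `` {concat ws | ws. list_all2 (\<in>) ws as}"

definition tinv :: "'g sword set \<Rightarrow> 'g sword set" where
  "tinv a = inv_sw ` a"

definition tlen :: "'g sword set \<Rightarrow> nat" where
  "tlen a = (LEAST k. \<exists>w\<in>a. length w = k)"

text \<open>Letters of \<open>\<hat>S\<close>: SL s for s in S, HL i a for a in \<open>\<tilde>H_i\<close>.\<close>
datatype 'g hletter = SL 'g | HL nat "'g sword set"

definition Shat :: "('g, 'b) monoid_scheme \<Rightarrow> 'g set \<Rightarrow> (nat \<Rightarrow> 'g set) \<Rightarrow> enat \<Rightarrow> nat \<Rightarrow> 'g hletter set" where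
  "Shat G S Ss rho n = SL ` S \<union> {HL i a | i a. i \<in> {1..n} \<and> a \<in> tcarrier G Ss rho i}"

definition cx :: "'g hletter \<Rightarrow> nat" where
  "cx x = (case x of SL s \<Rightarrow> 1 | HL i a \<Rightarrow> tlen a)"

definition Rprime :: "('g, 'b) monoid_scheme \<Rightarrow> 'g list set \<Rightarrow> (nat \<Rightarrow> 'g set) \<Rightarrow> enat \<Rightarrow> nat \<Rightarrow> 'g hletter list set" where
  "Rprime G R Ss rho n = {map SL r | r. r \<in> R} \<union>
     {[HL i (tclass G Ss rho i [(s, False)]), SL s] | i s. i \<in> {1..n} \<and> s \<in> Ss i}"

definition HRel :: "('g, 'b) monoid_scheme \<Rightarrow> (nat \<Rightarrow> 'g set) \<Rightarrow> enat \<Rightarrow> nat \<Rightarrow> 'g hletter list set" where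
  "HRel G Ss rho i = {map (HL i) as | as. 1 \<le> length as \<and> length as \<le> 3 \<and>
      set as \<subseteq> tcarrier G Ss rho i \<and> tprod G Ss rho i as = tclass G Ss rho i []}"

definition XRel :: "('g, 'b) monoid_scheme \<Rightarrow> 'g list set \<Rightarrow> (nat \<Rightarrow> 'g set) \<Rightarrow> enat \<Rightarrow> nat \<Rightarrow> 'g hletter list set" where
  "XRel G R Ss rho n = Rprime G R Ss rho n \<union> (\<Union>i\<in>{1..n}. HRel G Ss rho i)"

text \<open>Darts (oriented edges), the edge involution alph, the vertex rotation sigm, labels
  (letter, orientation sign) and the outer face.\<close>
record ('d, 'g) vkdiag =
  darts :: "'d set"
  alph :: "'d \<Rightarrow> 'd"
  sigm :: "'d \<Rightarrow> 'd"
  dlab :: "'d \<Rightarrow> 'g hletter \<times> bool"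
  outer :: "'d set"

definition dorb :: "('d \<Rightarrow> 'd) \<Rightarrow> 'd \<Rightarrow> 'd set" where
  "dorb f d = {(f ^^ k) d | k. True}"

definition phi :: "('d, 'g) vkdiag \<Rightarrow> 'd \<Rightarrow> 'd" where
  "phi D d = sigm D (alph D d)"

definition dvertices :: "('d, 'g) vkdiag \<Rightarrow> 'd set set" where
  "dvertices D = {dorb (sigm D) d | d. d \<in> darts D}"

definition dedges :: "('d, 'g) vkdiag \<Rightarrow> 'd set set" where
  "dedges D = {{d, alph D d} | d. d \<in> darts D}"

definition dfaces :: "('d, 'g) vkdiag \<Rightarrow> 'd set set" where
  "dfaces D = {dorb (phi D) d | d. d \<in> darts D}"

definition cells :: "('d, 'g) vkdiag \<Rightarrow> 'd set set" where
  "cells D = dfaces D - {outer D}"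

text \<open>Connected genus-0 combinatorial map (or the one-vertex diagram), with a designated outer face.\<close>
definition planar_map :: "('d, 'g) vkdiag \<Rightarrow> bool" where
  "planar_map D \<longleftrightarrow> finite (darts D) \<and>
     (\<forall>d\<in>darts D. alph D d \<in> darts D \<and> alph D d \<noteq> d \<and> alph D (alph D d) = d) \<and>
     bij_betw (sigm D) (darts D) (darts D) \<and>
     (\<forall>d\<in>darts D. \<forall>e\<in>darts D.
        (d, e) \<in> ({(x, alph D x) | x. x \<in> darts D} \<union> {(x, sigm D x) | x. x \<in> darts D})\<^sup>*) \<and>
     ((darts D = {} \<and> outer D = {}) \<or>
      (outer D \<in> dfaces D \<and> card (dvertices D) + card (dfaces D) = card (dedges D) + 2))"

definition fword :: "('d, 'g) vkdiag \<Rightarrow> 'd \<Rightarrow> ('g hletter \<times> bool) list" where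
  "fword D d = map (\<lambda>k. dlab D ((phi D ^^ k) d)) [0..<card (dorb (phi D) d)]"

definition reads :: "('d, 'g) vkdiag \<Rightarrow> 'd set \<Rightarrow> 'g hletter list \<Rightarrow> bool" where
  "reads D c r \<longleftrightarrow> (\<exists>d\<in>c. fword D d = pos_word r \<or> fword D d = inv_sw (pos_word r))"

definition vk_diagram :: "('g, 'b) monoid_scheme \<Rightarrow> 'g set \<Rightarrow> 'g list set \<Rightarrow> (nat \<Rightarrow> 'g set)
      \<Rightarrow> enat \<Rightarrow> nat \<Rightarrow> ('d, 'g) vkdiag \<Rightarrow> bool" where
  "vk_diagram G S R Ss rho n D \<longleftrightarrow> planar_map D \<and>
     (\<forall>d\<in>darts D. fst (dlab D d) \<in> Shat G S Ss rho n \<and>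
                  dlab D (alph D d) = (fst (dlab D d), \<not> snd (dlab D d))) \<and>
     (\<forall>c\<in>cells D. \<exists>r\<in>XRel G R Ss rho n. reads D c r)"

definition vk_area :: "('d, 'g) vkdiag \<Rightarrow> nat" where
  "vk_area D = card (cells D)"

text \<open>Maximal complexity of an edge label in \<open>D_thick\<close> (edges in the boundary of some 2-cell).\<close>
definition thick_norm :: "('d, 'g) vkdiag \<Rightarrow> nat" where
  "thick_norm D = Max (insert 0 {cx (fst (dlab D d)) | d. d \<in> darts D \<and> {d, alph D d} \<inter> \<Union>(cells D) \<noteq> {}})"

definition bdD :: "('d, 'g) vkdiag \<Rightarrow> 'd set set" where
  "bdD D = {e \<in> dedges D. e \<inter> outer D \<noteq> {}}"

definition htype :: "('g, 'b) monoid_scheme \<Rightarrow> (nat \<Rightarrow> 'g set) \<Rightarrow> enat \<Rightarrow> ('d, 'g) vkdiag \<Rightarrow> nat \<Rightarrow> 'd set \<Rightarrow> bool" where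
  "htype G Ss rho D i c \<longleftrightarrow> (\<exists>r\<in>HRel G Ss rho i. reads D c r)"

definition cadj :: "('g, 'b) monoid_scheme \<Rightarrow> (nat \<Rightarrow> 'g set) \<Rightarrow> enat \<Rightarrow> ('d, 'g) vkdiag \<Rightarrow> nat \<Rightarrow> ('d set \<times> 'd set) set" where
  "cadj G Ss rho D i = {(c, c'). c \<in> cells D \<and> c' \<in> cells D \<and> htype G Ss rho D i c \<and> htype G Ss rho D i c' \<and>
       (\<exists>e\<in>dedges D. e \<inter> c \<noteq> {} \<and> e \<inter> c' \<noteq> {})}"

text \<open>Clusters of type \<open>\<tilde>H_i\<close>, represented by their sets of 2-cells.\<close>
definition clusters :: "('g, 'b) monoid_scheme \<Rightarrow> (nat \<Rightarrow> 'g set) \<Rightarrow> enat \<Rightarrow> ('d, 'g) vkdiag \<Rightarrow> nat \<Rightarrow> 'd set set set" where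
  "clusters G Ss rho D i = {{c'. (c, c') \<in> (cadj G Ss rho D i)\<^sup>*} | c. c \<in> cells D \<and> htype G Ss rho D i c}"

definition bdC :: "('d, 'g) vkdiag \<Rightarrow> 'd set set \<Rightarrow> 'd set set" where
  "bdC D C = {e \<in> dedges D. card {c \<in> C. e \<inter> c \<noteq> {}} = 1}"

definition complicated :: "('d, 'g) vkdiag \<Rightarrow> 'd set set \<Rightarrow> bool" where
  "complicated D C \<longleftrightarrow> 2 \<le> card (bdC D C \<inter> bdD D)"

text \<open>Simple connectivity of (the closure of) a cluster: Euler characteristic V - E + F = 1
  (the closure is connected by construction, and is a subcomplex of a planar contractible complex).\<close>
definition simply_conn :: "('d, 'g) vkdiag \<Rightarrow> 'd set set \<Rightarrow> bool" where
  "simply_conn D C \<longleftrightarrow>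
     card {v \<in> dvertices D. v \<inter> \<Union>C \<noteq> {}} + card C = card {e \<in> dedges D. e \<inter> \<Union>C \<noteq> {}} + 1"

definition hval :: "('d, 'g) vkdiag \<Rightarrow> 'd \<Rightarrow> 'g sword set" where
  "hval D d = (case fst (dlab D d) of HL j a \<Rightarrow> (if snd (dlab D d) then a else tinv a) | SL s \<Rightarrow> {})"

text \<open>Standard filling: boundary darts b 1 .. b m (a closed walk from vertex v0), fan triangles
  f 1 .. f (m-2), the k-th with boundary walk (v0 -> v_k -> v_(k+1) -> v0), diagonals t j from v0
  to v_j reading \<open>a_1 \<dots> a_j\<close>.\<close>
definition standardly_filled :: "('g, 'b) monoid_scheme \<Rightarrow> (nat \<Rightarrow> 'g set) \<Rightarrow> enat \<Rightarrow> ('d, 'g) vkdiag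
      \<Rightarrow> nat \<Rightarrow> 'd set set \<Rightarrow> bool" where
  "standardly_filled G Ss rho D i C \<longleftrightarrow>
    (\<exists>m b t f. 3 \<le> m \<and> inj_on f {1..m-2} \<and> C = f ` {1..m-2} \<and>
      (\<forall>k\<in>{1..m}. b k \<in> darts D) \<and>
      (\<forall>j\<in>{2..m-2}. t j \<in> darts D \<and>
          hval D (t j) = tprod G Ss rho i (map (\<lambda>k. hval D (b k)) [1..<j+1])) \<and>
      (\<forall>k\<in>{1..m-2}.
         let ein = (if k = 1 then b 1 else t k);
             eout = (if k = m - 2 then b m else alph D (t (k+1)))
         in card (f k) = 3 \<and> f k = dorb (phi D) ein \<and>
            phi D ein = b (k+1) \<and> phi D (b (k+1)) = eout \<and> phi D eout = ein) \<and>
      {{b k, alph D (b k)} | k. k \<in> {1..m}} = bdC D C)"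

end

theory Submission
  imports Defs
begin

text \<open>
  Cells of type \<open>\<R>'\<close> only carry letters of complexity at most 1, so it suffices to bound
  the labels of a standardly filled cluster C of type \<open>\<tilde>H_i\<close> with boundary labels
  \<open>a\<^sub>1, \<dots>, a\<^sub>m\<close>, which has m - 2 cells. A boundary edge of C that is interior to D borders
  a cell outside C; that cell cannot be of type \<open>\<tilde>H_i\<close>, so it reads a relator of
  \<open>\<R>'\<close> and the edge has complexity at most 1. As C is not complicated, at most one
  boundary label \<open>a\<^sub>k\<^sub>0\<close> is longer, and since \<open>a\<^sub>1 \<cdots> a\<^sub>m = 1\<close> it is
  represented by a word of length at most m - 1. Hence the diagonal labels \<open>a\<^sub>1 \<cdots> a\<^sub>j\<close>
  have length at most j + m - 1 \<le> 2m - 3 \<le> 6(m - 2).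
\<close>

section \<open>Equivalence of words in a presented group\<close>

lemma pres_step_append_cong:
  assumes "(x, y) \<in> pres_step A Rs" shows "(p @ x @ q, p @ y @ q) \<in> pres_step A Rs"
  using assms
proof cases
  case (cancel z u b v)
  then show ?thesis using pres_step.cancel[of z A "p @ u" b "v @ q" Rs] by simp
next
  case (relator r u v)
  then show ?thesis using pres_step.relator[of r Rs "p @ u" "v @ q" A] by simp
next
  case (relator_inv r u v)
  then show ?thesis using pres_step.relator_inv[of r Rs "p @ u" "v @ q" A] by simp
qed

lemma inv_sw_append [simp]: "inv_sw (u @ v) = inv_sw v @ inv_sw u"
  by (simp add: inv_sw_def)

lemma inv_sw_Cons: "inv_sw ((x, b) # w) = inv_sw w @ [(x, \<not> b)]"
  by (simp add: inv_sw_def)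

lemma inv_sw_inv_sw [simp]: "inv_sw (inv_sw w) = w"
  by (induct w) (auto simp: inv_sw_def)

lemma inv_sw_Nil [simp]: "inv_sw [] = []"
  by (simp add: inv_sw_def)

lemma length_inv_sw [simp]: "length (inv_sw w) = length w"
  by (simp add: inv_sw_def)

lemma inv_sw_in_lists_iff [simp]: "inv_sw w \<in> lists (A \<times> UNIV) \<longleftrightarrow> w \<in> lists (A \<times> UNIV)"
  by (auto simp: inv_sw_def)

lemma pres_step_inv_sw:
  assumes "(x, y) \<in> pres_step A Rs" shows "(inv_sw x, inv_sw y) \<in> pres_step A Rs"
  using assms
proof cases
  case (cancel z u b v)
  then show ?thesis
    using pres_step.cancel[of z A "inv_sw v" b "inv_sw u" Rs] by (simp add: inv_sw_def)
next
  case (relator r u v)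
  then show ?thesis using pres_step.relator_inv[of r Rs "inv_sw v" "inv_sw u" A] by simp
next
  case (relator_inv r u v)
  then show ?thesis using pres_step.relator[of r Rs "inv_sw v" "inv_sw u" A] by simp
qed

lemma pres_eq_refl: "u \<in> lists (A \<times> UNIV) \<Longrightarrow> (u, u) \<in> pres_eq A Rs"
  by (simp add: pres_eq_def)

lemma pres_eq_lists:
  "(u, v) \<in> pres_eq A Rs \<Longrightarrow> u \<in> lists (A \<times> UNIV) \<and> v \<in> lists (A \<times> UNIV)"
  by (simp add: pres_eq_def)

lemma pres_eq_sym: "(u, v) \<in> pres_eq A Rs \<Longrightarrow> (v, u) \<in> pres_eq A Rs"
proof -
  let ?E = "pres_step A Rs \<union> (pres_step A Rs)\<inverse>"
  assume uv: "(u, v) \<in> pres_eq A Rs"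
  then have "(v, u) \<in> (?E\<inverse>)\<^sup>*"
    by (simp add: pres_eq_def rtrancl_converse)
  moreover have "?E\<inverse> = ?E"
    by (simp add: converse_Un Un_commute)
  ultimately show ?thesis
    using uv by (simp add: pres_eq_def)
qed

lemma pres_eq_trans [trans]:
  "(u, v) \<in> pres_eq A Rs \<Longrightarrow> (v, w) \<in> pres_eq A Rs \<Longrightarrow> (u, w) \<in> pres_eq A Rs"
  unfolding pres_eq_def by auto

lemma equiv_pres_eq: "equiv (lists (A \<times> UNIV)) (pres_eq A Rs)"
proof (rule equivI)
  show "pres_eq A Rs \<subseteq> lists (A \<times> UNIV) \<times> lists (A \<times> UNIV)"
    using pres_eq_lists by fast
  show "refl_on (lists (A \<times> UNIV)) (pres_eq A Rs)"
    by (rule refl_onI) (use pres_eq_refl in blast)+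
  show "sym (pres_eq A Rs)"
    by (rule symI) (rule pres_eq_sym)
  show "trans (pres_eq A Rs)"
    by (rule transI) (rule pres_eq_trans)
qed

lemma pres_eq_append_cong:
  assumes "(u, v) \<in> pres_eq A Rs" "p \<in> lists (A \<times> UNIV)" "q \<in> lists (A \<times> UNIV)"
  shows "(p @ u @ q, p @ v @ q) \<in> pres_eq A Rs"
proof -
  have "(u, v) \<in> (pres_step A Rs \<union> (pres_step A Rs)\<inverse>)\<^sup>*"
    using assms(1) by (simp add: pres_eq_def)
  then have "(p @ u @ q, p @ v @ q) \<in> (pres_step A Rs \<union> (pres_step A Rs)\<inverse>)\<^sup>*"
  proof induction
    case (step y z)
    then have "(p @ y @ q, p @ z @ q) \<in> pres_step A Rs \<union> (pres_step A Rs)\<inverse>"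
      using pres_step_append_cong by blast
    then show ?case using step.IH by (rule rtrancl_into_rtrancl[rotated])
  qed simp
  then show ?thesis using assms by (simp add: pres_eq_def)
qed

lemma pres_eq_append:
  assumes "(u, v) \<in> pres_eq A Rs" "(u', v') \<in> pres_eq A Rs"
  shows "(u @ u', v @ v') \<in> pres_eq A Rs"
proof -
  have "(u @ u', v @ u') \<in> pres_eq A Rs"
    using pres_eq_append_cong[OF assms(1), of "[]" u'] assms(2) by (simp add: pres_eq_def)
  moreover have "(v @ u', v @ v') \<in> pres_eq A Rs"
    using pres_eq_append_cong[OF assms(2), of v "[]"] assms(1) by (simp add: pres_eq_def)
  ultimately show ?thesis by (rule pres_eq_trans)
qed

lemma pres_eq_inv_sw: "(u, v) \<in> pres_eq A Rs \<Longrightarrow> (inv_sw u, inv_sw v) \<in> pres_eq A Rs"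
proof -
  assume uv: "(u, v) \<in> pres_eq A Rs"
  have "(u, v) \<in> (pres_step A Rs \<union> (pres_step A Rs)\<inverse>)\<^sup>*"
    using uv by (simp add: pres_eq_def)
  then have "(inv_sw u, inv_sw v) \<in> (pres_step A Rs \<union> (pres_step A Rs)\<inverse>)\<^sup>*"
  proof induction
    case (step y z)
    then have "(inv_sw y, inv_sw z) \<in> pres_step A Rs \<union> (pres_step A Rs)\<inverse>"
      using pres_step_inv_sw by blast
    then show ?case using step.IH by (rule rtrancl_into_rtrancl[rotated])
  qed simp
  then show ?thesis using uv by (simp add: pres_eq_def)
qed

lemma pres_eq_cancel_inv_sw: "w \<in> lists (A \<times> UNIV) \<Longrightarrow> (w @ inv_sw w, []) \<in> pres_eq A Rs"
proof (induct w)
  case Nil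
  then show ?case by (simp add: pres_eq_refl)
next
  case (Cons x w)
  obtain a b where x: "x = (a, b)" by (cases x)
  have a: "a \<in> A" and w: "w \<in> lists (A \<times> UNIV)" using Cons.prems x by auto
  have "([(a, b)] @ (w @ inv_sw w) @ [(a, \<not> b)], [(a, b)] @ [] @ [(a, \<not> b)]) \<in> pres_eq A Rs"
    using pres_eq_append_cong[OF Cons.hyps[OF w], of "[(a, b)]" "[(a, \<not> b)]"] a by simp
  moreover have "([] @ [(a, b), (a, \<not> b)] @ [], [] @ []) \<in> pres_step A Rs"
    by (rule pres_step.cancel[OF a])
  then have "([(a, b), (a, \<not> b)], []) \<in> pres_eq A Rs"
    using a by (auto simp: pres_eq_def)
  ultimately show ?case by (auto simp: x inv_sw_Cons intro: pres_eq_trans)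
qed

lemma pres_eq_rotate: "(u @ v, []) \<in> pres_eq A Rs \<Longrightarrow> (v @ u, []) \<in> pres_eq A Rs"
proof -
  assume uv: "(u @ v, []) \<in> pres_eq A Rs"
  then have "u @ v \<in> lists (A \<times> UNIV)"
    using pres_eq_lists by blast
  then have u: "u \<in> lists (A \<times> UNIV)" and v: "v \<in> lists (A \<times> UNIV)"
    by auto
  have "(v @ u, v @ (u @ v) @ inv_sw v) \<in> pres_eq A Rs"
    using pres_eq_sym[OF pres_eq_append_cong[OF pres_eq_cancel_inv_sw[OF v], of "v @ u" "[]"]] u v
    by simp
  also have "(v @ (u @ v) @ inv_sw v, v @ [] @ inv_sw v) \<in> pres_eq A Rs"
    using pres_eq_append_cong[OF uv] v by simp
  also have "(v @ [] @ inv_sw v, []) \<in> pres_eq A Rs"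
    using pres_eq_cancel_inv_sw[OF v] by simp
  finally show ?thesis .
qed

lemma pres_eq_solve:
  assumes "(p @ u @ q, []) \<in> pres_eq A Rs"
  shows "(u, inv_sw p @ inv_sw q) \<in> pres_eq A Rs"
proof -
  have "p @ u @ q \<in> lists (A \<times> UNIV)"
    using assms pres_eq_lists by blast
  then have u: "u \<in> lists (A \<times> UNIV)" and qp: "q @ p \<in> lists (A \<times> UNIV)"
    by auto
  have rot: "((u @ q) @ p, []) \<in> pres_eq A Rs"
    using pres_eq_rotate[of p "u @ q"] assms by simp
  have "(u, u @ (q @ p) @ inv_sw (q @ p)) \<in> pres_eq A Rs"
    using pres_eq_sym[OF pres_eq_append_cong[OF pres_eq_cancel_inv_sw[OF qp], of u "[]"]] u
    by simp
  also have "(u @ (q @ p) @ inv_sw (q @ p), [] @ inv_sw (q @ p)) \<in> pres_eq A Rs"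
    using pres_eq_append_cong[OF rot, of "[]" "inv_sw (q @ p)"] qp by simp
  finally show ?thesis
    by simp
qed

lemma length_concat_map_le_length:
  "(\<forall>k\<in>set xs. length (h k) \<le> 1) \<Longrightarrow> length (concat (map h xs)) \<le> length xs"
  by (induct xs) auto

lemma length_concat_map_le_length_add:
  assumes "distinct xs" "\<forall>k\<in>set xs. k \<noteq> k0 \<longrightarrow> length (h k) \<le> 1"
  shows "length (concat (map h xs)) \<le> length xs + length (h k0)"
  using assms
proof (induct xs)
  case (Cons x xs)
  show ?case
  proof (cases "x = k0")
    case True
    then have "length (concat (map h xs)) \<le> length xs"
      using Cons.prems by (intro length_concat_map_le_length) auto
    then show ?thesis using True by simp
  qed (use Cons in auto)
qed simp

lemma upt_split_at:
  assumes "1 \<le> k" "k \<le> m" shows "[1..<m+1] = [1..<k] @ k # [k+1..<m+1]"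
  using assms upt_add_eq_append[of 1 k "m + 1 - k"] upt_conv_Cons[of k "m + 1"] by simp

lemma pres_eq_short_factor:
  assumes triv: "(concat (map w [1..<m+1]), []) \<in> pres_eq A Rs" and k0: "k0 \<in> {1..m}"
    and short: "\<forall>k\<in>{1..m}. k \<noteq> k0 \<longrightarrow> length (w k) \<le> 1"
  obtains v where "(w k0, v) \<in> pres_eq A Rs" "length v \<le> m - 1"
proof
  define p where "p = concat (map w [1..<k0])"
  define q where "q = concat (map w [k0+1..<m+1])"
  have "(p @ w k0 @ q, []) \<in> pres_eq A Rs"
    using triv upt_split_at[of k0 m] k0 by (simp add: p_def q_def)
  then show "(w k0, inv_sw p @ inv_sw q) \<in> pres_eq A Rs"
    by (rule pres_eq_solve)
  have "length p \<le> k0 - 1"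
    using length_concat_map_le_length[of "[1..<k0]" w] short k0 by (auto simp: p_def)
  moreover have "length q \<le> m - k0"
    using length_concat_map_le_length[of "[k0+1..<m+1]" w] short k0 by (auto simp: q_def)
  ultimately show "length (inv_sw p @ inv_sw q) \<le> m - 1"
    using k0 by auto
qed

lemma inv_sw_image_class:
  "inv_sw ` (pres_eq A Rs `` {x}) = pres_eq A Rs `` {inv_sw x}"
proof
  show "inv_sw ` (pres_eq A Rs `` {x}) \<subseteq> pres_eq A Rs `` {inv_sw x}"
    using pres_eq_inv_sw by fastforce
  show "pres_eq A Rs `` {inv_sw x} \<subseteq> inv_sw ` (pres_eq A Rs `` {x})"
  proof
    fix y assume "y \<in> pres_eq A Rs `` {inv_sw x}"
    then have "(x, inv_sw y) \<in> pres_eq A Rs"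
      using pres_eq_inv_sw by fastforce
    then show "y \<in> inv_sw ` (pres_eq A Rs `` {x})"
      by (metis Image_singleton_iff image_eqI inv_sw_inv_sw)
  qed
qed

lemma inv_sw_image_quotient:
  assumes "Y \<in> lists (A \<times> UNIV) // pres_eq A Rs"
  shows "inv_sw ` Y \<in> lists (A \<times> UNIV) // pres_eq A Rs"
proof -
  obtain x where "Y = pres_eq A Rs `` {x}" "x \<in> lists (A \<times> UNIV)"
    using assms by (rule quotientE)
  then show ?thesis
    using quotientI[of "inv_sw x"] by (simp only: inv_sw_image_class inv_sw_in_lists_iff)
qed

lemma list_all2_map_in: "(\<forall>x\<in>set xs. g x \<in> h x) \<Longrightarrow> list_all2 (\<in>) (map g xs) (map h xs)"
  by (induct xs) auto

lemma concat_pres_eq: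
  assumes "list_all2 (\<in>) ws Ys" "list_all2 (\<in>) ws' Ys"
    and "set Ys \<subseteq> lists (A \<times> UNIV) // pres_eq A Rs"
  shows "(concat ws, concat ws') \<in> pres_eq A Rs"
  using assms
proof (induct ws Ys arbitrary: ws' rule: list_all2_induct)
  case Nil
  then show ?case by (simp add: pres_eq_refl)
next
  case (Cons w ws Y Ys)
  then obtain w' ws'' where ws': "ws' = w' # ws''" "w' \<in> Y" "list_all2 (\<in>) ws'' Ys"
    by (cases ws') auto
  have "(w, w') \<in> pres_eq A Rs"
    by (rule in_quotient_imp_in_rel[OF equiv_pres_eq, of Y]) (use Cons ws' in auto)
  moreover have "(concat ws, concat ws'') \<in> pres_eq A Rs"
    using Cons ws' by simp
  ultimately show ?case
    using pres_eq_append ws'(1) by simp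
qed

lemma concat_in_lists:
  "list_all2 (\<in>) ws Ys \<Longrightarrow> set Ys \<subseteq> lists (A \<times> UNIV) // pres_eq A Rs
   \<Longrightarrow> concat ws \<in> lists (A \<times> UNIV)"
  using concat_pres_eq[of ws Ys ws] pres_eq_lists by blast

lemma pres_eq_Image_concat:
  assumes "list_all2 (\<in>) ws Ys" "set Ys \<subseteq> lists (A \<times> UNIV) // pres_eq A Rs"
  shows "pres_eq A Rs `` {concat ws' | ws'. list_all2 (\<in>) ws' Ys} = pres_eq A Rs `` {concat ws}"
proof
  show "pres_eq A Rs `` {concat ws' | ws'. list_all2 (\<in>) ws' Ys} \<subseteq> pres_eq A Rs `` {concat ws}"
    using concat_pres_eq[OF assms(1) _ assms(2)] pres_eq_sym pres_eq_trans by blast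
  show "pres_eq A Rs `` {concat ws} \<subseteq> pres_eq A Rs `` {concat ws' | ws'. list_all2 (\<in>) ws' Ys}"
    using assms(1) by blast
qed

lemma tlen_le: "w \<in> Y \<Longrightarrow> tlen Y \<le> length w"
  unfolding tlen_def by (rule Least_le) blast

lemma tlen_attained: "Y \<noteq> {} \<Longrightarrow> \<exists>w\<in>Y. length w = tlen Y"
  unfolding tlen_def by (rule LeastI_ex) blast

lemma tlen_inv_sw_image: "tlen (inv_sw ` Y) = tlen Y"
  unfolding tlen_def by simp

section \<open>Orbits and faces\<close>

lemma funpow_in_invariant: "x \<in> A \<Longrightarrow> f ` A \<subseteq> A \<Longrightarrow> (f ^^ k) x \<in> A"
  by (induct k) auto

lemma inj_on_funpow_invariant: "inj_on f A \<Longrightarrow> f ` A \<subseteq> A \<Longrightarrow> inj_on (f ^^ k) A"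
proof (induct k)
  case (Suc k)
  have "(f ^^ k) ` A \<subseteq> A"
    using funpow_in_invariant[OF _ Suc.prems(2)] by blast
  then have "inj_on (f \<circ> (f ^^ k)) A"
    using Suc by (intro comp_inj_on) (auto intro: inj_on_subset)
  then show ?case by (simp add: comp_def)
qed simp

lemma periodic_point_of_finite_inj:
  assumes fin: "finite A" and inj: "inj_on f A" and inv: "f ` A \<subseteq> A" and x: "x \<in> A"
  shows "\<exists>p>0. (f ^^ p) x = x"
proof -
  have "(\<lambda>k. (f ^^ k) x) ` {..card A} \<subseteq> A"
    using funpow_in_invariant[OF x inv] by blast
  then have "\<not> inj_on (\<lambda>k. (f ^^ k) x) {..card A}"
    using card_inj_on_le[OF _ _ fin, of "\<lambda>k. (f ^^ k) x" "{..card A}"] by auto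
  then obtain i j where ij: "i < j" "(f ^^ i) x = (f ^^ j) x"
    unfolding inj_on_def by (metis linorder_neqE_nat)
  have "(f ^^ i) ((f ^^ (j - i)) x) = (f ^^ (i + (j - i))) x"
    by (simp add: funpow_add)
  then have "(f ^^ i) ((f ^^ (j - i)) x) = (f ^^ i) x"
    using ij by simp
  then have "(f ^^ (j - i)) x = x"
    using inj_onD[OF inj_on_funpow_invariant[OF inj inv]] funpow_in_invariant[OF x inv] x by blast
  then show ?thesis
    using ij(1) by (intro exI[of _ "j - i"]) simp
qed

lemma dorb_self: "x \<in> dorb f x"
  unfolding dorb_def by (rule CollectI, rule exI[of _ 0]) simp

lemma dorb_periodic:
  assumes "(f ^^ p) x = x" "0 < p"
  shows "dorb f x = (\<lambda>k. (f ^^ k) x) ` {..<p}"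
proof
  show "dorb f x \<subseteq> (\<lambda>k. (f ^^ k) x) ` {..<p}"
  proof
    fix y assume "y \<in> dorb f x"
    then obtain k where "y = (f ^^ k) x"
      unfolding dorb_def by blast
    then have "y = (f ^^ (k mod p)) x"
      using funpow_mod_eq[OF assms(1)] by simp
    then show "y \<in> (\<lambda>k. (f ^^ k) x) ` {..<p}"
      using assms(2) by simp
  qed
  show "(\<lambda>k. (f ^^ k) x) ` {..<p} \<subseteq> dorb f x"
    unfolding dorb_def by blast
qed

lemma dorb_eq_of_mem:
  assumes per: "(f ^^ p) x = x" "0 < p" and y: "y \<in> dorb f x"
  shows "dorb f y = dorb f x"
proof -
  obtain j where j: "j < p" "y = (f ^^ j) x"
    using y dorb_periodic[OF per] by auto
  have "(f ^^ (p - j)) y = (f ^^ (p - j + j)) x"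
    using j(2) by (simp add: funpow_add)
  then have x: "(f ^^ (p - j)) y = x"
    using j(1) per(1) by simp
  have "(f ^^ k) x = (f ^^ (k + (p - j))) y" for k
    by (subst x[symmetric]) (simp add: funpow_add)
  then have "dorb f x \<subseteq> dorb f y"
    unfolding dorb_def by blast
  moreover have "(f ^^ k) y = (f ^^ (k + j)) x" for k
    using j(2) by (simp add: funpow_add)
  then have "dorb f y \<subseteq> dorb f x"
    unfolding dorb_def by blast
  ultimately show ?thesis by blast
qed

lemma dorb_enumerated:
  assumes "finite A" "inj_on f A" "f ` A \<subseteq> A" "x \<in> A" "y \<in> dorb f x"
  shows "\<exists>j < card (dorb f x). y = (f ^^ j) x"
proof -
  define p where "p = (LEAST p. 0 < p \<and> (f ^^ p) x = x)"
  have p: "0 < p" "(f ^^ p) x = x"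
    using LeastI_ex[OF periodic_point_of_finite_inj[OF assms(1-4)]] by (auto simp: p_def)
  have "inj_on (\<lambda>k. (f ^^ k) x) {0..<p}"
    by (rule inj_on_funpow_least[OF p(2)]) (use not_less_Least in \<open>auto simp: p_def\<close>)
  then have "card (dorb f x) = p"
    using dorb_periodic[OF p(2,1)] card_image by (fastforce simp: atLeast0LessThan)
  then show ?thesis
    using assms(5) dorb_periodic[OF p(2,1)] by auto
qed

lemma phi_on_darts:
  assumes "planar_map D" shows "inj_on (phi D) (darts D)" and "phi D ` darts D \<subseteq> darts D"
proof -
  have al: "\<And>d. d \<in> darts D \<Longrightarrow> alph D d \<in> darts D \<and> alph D (alph D d) = d"
    and sb: "bij_betw (sigm D) (darts D) (darts D)"
    using assms unfolding planar_map_def by auto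
  show "inj_on (phi D) (darts D)"
  proof (rule inj_onI)
    fix x y assume x: "x \<in> darts D" and y: "y \<in> darts D" and "phi D x = phi D y"
    then have "sigm D (alph D x) = sigm D (alph D y)"
      by (simp add: phi_def)
    then have "alph D x = alph D y"
      using inj_onD[OF bij_betw_imp_inj_on[OF sb]] al x y by blast
    then have "alph D (alph D x) = alph D (alph D y)"
      by simp
    then show "x = y"
      using al x y by simp
  qed
  show "phi D ` darts D \<subseteq> darts D"
    using al bij_betw_apply[OF sb] by (auto simp: phi_def)
qed

lemma dorb_phi_subset_darts:
  assumes "planar_map D" "d \<in> darts D" shows "dorb (phi D) d \<subseteq> darts D"
  unfolding dorb_def using funpow_in_invariant[OF assms(2) phi_on_darts(2)[OF assms(1)]]
  by blast

lemma dorb_phi_eq_of_mem: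
  assumes pm: "planar_map D" and d: "d \<in> darts D" and e: "e \<in> dorb (phi D) d"
  shows "dorb (phi D) e = dorb (phi D) d"
proof -
  have "finite (darts D)"
    using pm by (simp add: planar_map_def)
  then obtain p where "0 < p" "(phi D ^^ p) d = d"
    using periodic_point_of_finite_inj[OF _ phi_on_darts[OF pm] d] by blast
  then show ?thesis
    using dorb_eq_of_mem e by metis
qed

lemma face_eq_dorb:
  assumes pm: "planar_map D" and c: "c \<in> dfaces D" and e: "e \<in> c"
  shows "c = dorb (phi D) e"
proof -
  obtain d where "d \<in> darts D" "c = dorb (phi D) d"
    using c unfolding dfaces_def by blast
  then show ?thesis
    using dorb_phi_eq_of_mem[OF pm] e by simp
qed

lemma cell_subset_darts:
  assumes pm: "planar_map D" and c: "c \<in> cells D" shows "c \<subseteq> darts D"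
proof -
  obtain d where "d \<in> darts D" "c = dorb (phi D) d"
    using c unfolding cells_def dfaces_def by blast
  then show ?thesis
    using dorb_phi_subset_darts[OF pm] by simp
qed

lemma finite_cells: "planar_map D \<Longrightarrow> finite (cells D)"
proof -
  assume "planar_map D"
  then have "finite (dorb (phi D) ` darts D)"
    by (simp add: planar_map_def)
  moreover have "dfaces D = dorb (phi D) ` darts D"
    unfolding dfaces_def by auto
  ultimately show ?thesis
    unfolding cells_def by simp
qed

lemma finite_dedges: "planar_map D \<Longrightarrow> finite (dedges D)"
proof -
  assume "planar_map D"
  then have "finite ((\<lambda>d. {d, alph D d}) ` darts D)"
    by (simp add: planar_map_def)
  moreover have "dedges D = (\<lambda>d. {d, alph D d}) ` darts D"
    unfolding dedges_def by auto
  ultimately show ?thesis by simp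
qed

lemma edge_in_dedges: "d \<in> darts D \<Longrightarrow> {d, alph D d} \<in> dedges D"
  unfolding dedges_def by blast

lemma face_label_in_fword:
  assumes pm: "planar_map D" and c: "c \<in> dfaces D" and d0: "d0 \<in> c" and d: "d \<in> c"
  shows "dlab D d \<in> set (fword D d0)"
proof -
  have c_eq: "c = dorb (phi D) d0"
    by (rule face_eq_dorb[OF pm c d0])
  have "d0 \<in> darts D"
    using c d0 dorb_phi_subset_darts[OF pm] unfolding dfaces_def by blast
  moreover have "finite (darts D)"
    using pm by (simp add: planar_map_def)
  ultimately obtain j where "j < card (dorb (phi D) d0)" "d = (phi D ^^ j) d0"
    using dorb_enumerated[OF _ phi_on_darts[OF pm]] d c_eq by blast
  then show ?thesis
    unfolding fword_def by auto
qed

lemma cell_labels: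
  assumes pm: "planar_map D" and c: "c \<in> cells D" and rd: "reads D c r"
  obtains s where "\<forall>d\<in>c. snd (dlab D d) = s \<and> fst (dlab D d) \<in> set r"
proof -
  obtain d0 where d0: "d0 \<in> c" "fword D d0 = pos_word r \<or> fword D d0 = inv_sw (pos_word r)"
    using rd unfolding reads_def by blast
  have all: "\<forall>d\<in>c. dlab D d \<in> set (fword D d0)"
    using face_label_in_fword[OF pm _ d0(1)] c by (auto simp: cells_def)
  from d0(2) show ?thesis
  proof
    assume "fword D d0 = pos_word r"
    then have "\<forall>d\<in>c. snd (dlab D d) = True \<and> fst (dlab D d) \<in> set r"
      using all by (fastforce simp: pos_word_def)
    then show ?thesis by (rule that)
  next
    assume "fword D d0 = inv_sw (pos_word r)"
    then have "\<forall>d\<in>c. snd (dlab D d) = False \<and> fst (dlab D d) \<in> set r"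
      using all by (fastforce simp: pos_word_def inv_sw_def)
    then show ?thesis by (rule that)
  qed
qed

lemma cell_not_both_darts:
  assumes "planar_map D" "c \<in> cells D" "reads D c r"
    and "dlab D (alph D d) = (fst (dlab D d), \<not> snd (dlab D d))" "d \<in> c"
  shows "alph D d \<notin> c"
  using cell_labels[OF assms(1-3)] assms(4,5) by (metis snd_conv)

lemma triangle_dorb:
  assumes "phi D x = y" "phi D y = z" "phi D z = x"
  shows "dorb (phi D) x = {x, y, z}"
proof -
  have "(phi D ^^ k) x \<in> {x, y, z}" for k
    by (induct k) (use assms in auto)
  moreover have "(phi D ^^ 0) x = x" "(phi D ^^ 1) x = y" "(phi D ^^ 2) x = z"
    using assms by (auto simp: numeral_2_eq_2)
  then have "{x, y, z} \<subseteq> {(phi D ^^ k) x | k. True}"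
    by (metis (mono_tags, lifting) empty_subsetI insert_subset mem_Collect_eq)
  ultimately show ?thesis
    unfolding dorb_def by blast
qed

lemma triangle_fword:
  assumes "phi D x = y" "phi D y = z" "phi D z = x" "card {x, y, z} = 3"
  shows "fword D x = [dlab D x, dlab D y, dlab D z]"
  using assms triangle_dorb[OF assms(1-3)]
  by (simp add: fword_def numeral_3_eq_3 upt_rec)

lemma tcarrier_eq: "tcarrier G Ss rho i = lists (Ss i \<times> UNIV) // pres_eq (Ss i) (tRel G Ss rho i)"
  by (simp add: tcarrier_def tEq_def)

lemma concat_trivial_of_tprod:
  assumes as: "set as \<subseteq> tcarrier G Ss rho i" "tprod G Ss rho i as = tclass G Ss rho i []"
    and ws: "list_all2 (\<in>) ws as"
  shows "(concat ws, []) \<in> tEq G Ss rho i"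
proof -
  have "([], []) \<in> tEq G Ss rho i"
    by (simp add: tEq_def pres_eq_refl)
  then have "[] \<in> tprod G Ss rho i as"
    using as(2) by (simp add: tclass_def)
  then obtain ws' where ws': "list_all2 (\<in>) ws' as" "(concat ws', []) \<in> tEq G Ss rho i"
    unfolding tprod_def by blast
  have "(concat ws, concat ws') \<in> tEq G Ss rho i"
    using concat_pres_eq[OF ws ws'(1)] as(1) by (simp add: tcarrier_eq tEq_def)
  then show ?thesis
    using ws'(2) pres_eq_trans by (simp add: tEq_def)
qed

lemma product_trivial_of_reading:
  assumes reads: "[dlab D p, dlab D q, dlab D r] = pos_word (map (HL i) as) \<or>
                  [dlab D p, dlab D q, dlab D r] = inv_sw (pos_word (map (HL i) as))"
    and as: "set as \<subseteq> tcarrier G Ss rho i" "tprod G Ss rho i as = tclass G Ss rho i []"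
    and uvw: "u \<in> hval D p" "v \<in> hval D q" "w \<in> hval D r"
  shows "(u @ v @ w, []) \<in> tEq G Ss rho i"
proof -
  from reads have "length [dlab D p, dlab D q, dlab D r] = length (pos_word (map (HL i) as))"
    by (elim disjE) simp_all
  then have "length as = 3"
    by (simp add: pos_word_def)
  then obtain a1 a2 a3 where as3: "as = [a1, a2, a3]"
    by (auto simp: numeral_3_eq_3 length_Suc_conv)
  from reads show ?thesis
  proof
    assume "[dlab D p, dlab D q, dlab D r] = pos_word (map (HL i) as)"
    then have "hval D p = a1" "hval D q = a2" "hval D r = a3"
      by (auto simp: as3 pos_word_def hval_def)
    then have "list_all2 (\<in>) [u, v, w] as"
      using uvw by (simp add: as3)
    from concat_trivial_of_tprod[OF as this] show ?thesis
      by simp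
  next
    assume "[dlab D p, dlab D q, dlab D r] = inv_sw (pos_word (map (HL i) as))"
    then have "hval D p = inv_sw ` a3" "hval D q = inv_sw ` a2" "hval D r = inv_sw ` a1"
      by (auto simp: as3 pos_word_def inv_sw_def hval_def tinv_def)
    then have "inv_sw w \<in> a1" "inv_sw v \<in> a2" "inv_sw u \<in> a3"
      using uvw by auto
    then have "list_all2 (\<in>) [inv_sw w, inv_sw v, inv_sw u] as"
      by (simp add: as3)
    from concat_trivial_of_tprod[OF as this]
    have "(inv_sw w @ inv_sw v @ inv_sw u, []) \<in> tEq G Ss rho i"
      by simp
    then have "(inv_sw (inv_sw w @ inv_sw v @ inv_sw u), inv_sw []) \<in> tEq G Ss rho i"
      unfolding tEq_def by (rule pres_eq_inv_sw)
    then show ?thesis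
      by simp
  qed
qed

lemma cx_le_one_of_Rprime:
  assumes "r \<in> Rprime G R Ss rho n" "x \<in> set r" shows "cx x \<le> 1"
proof -
  have "tlen (tclass G Ss rho j [(s, False)]) \<le> 1" if "s \<in> Ss j" for j s
  proof -
    have "([(s, False)], [(s, False)]) \<in> tEq G Ss rho j"
      using that by (simp add: tEq_def pres_eq_refl)
    then show ?thesis
      using tlen_le[of "[(s, False)]"] by (fastforce simp: tclass_def)
  qed
  then show ?thesis
    using assms unfolding Rprime_def by (auto simp: cx_def)
qed

section \<open>Standardly filled clusters\<close>

locale standard_cluster =
  fixes G :: "('g, 'b) monoid_scheme" and S :: "'g set" and R :: "'g list set"
    and Ss :: "nat \<Rightarrow> 'g set" and rho :: enat and n :: nat and D :: "('d, 'g) vkdiag"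
    and i :: nat and C :: "'d set set"
    and m :: nat and b :: "nat \<Rightarrow> 'd" and t :: "nat \<Rightarrow> 'd" and f :: "nat \<Rightarrow> 'd set"
  assumes vk: "vk_diagram G S R Ss rho n D"
    and C_cells: "C \<subseteq> cells D"
    and C_htype: "\<forall>c\<in>C. htype G Ss rho D i c"
    and C_closed: "\<forall>c\<in>C. \<forall>c'. (c, c') \<in> cadj G Ss rho D i \<longrightarrow> c' \<in> C"
    and not_complicated: "\<not> complicated D C"
    and m3: "3 \<le> m" and f_inj: "inj_on f {1..m-2}" and C_eq: "C = f ` {1..m-2}"
    and b_darts: "\<forall>k\<in>{1..m}. b k \<in> darts D"
    and diagonals: "\<forall>j\<in>{2..m-2}. t j \<in> darts D \<and>
          hval D (t j) = tprod G Ss rho i (map (\<lambda>k. hval D (b k)) [1..<j+1])"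
    and fan: "\<forall>k\<in>{1..m-2}.
         let ein = (if k = 1 then b 1 else t k);
             eout = (if k = m - 2 then b m else alph D (t (k+1)))
         in card (f k) = 3 \<and> f k = dorb (phi D) ein \<and>
            phi D ein = b (k+1) \<and> phi D (b (k+1)) = eout \<and> phi D eout = ein"
    and boundary: "{{b k, alph D (b k)} | k. k \<in> {1..m}} = bdC D C"
begin

definition fan_in where "fan_in k = (if k = 1 then b 1 else t k)"
definition fan_out where "fan_out k = (if k = m - 2 then b m else alph D (t (k+1)))"

lemma planar: "planar_map D"
  using vk by (simp add: vk_diagram_def)

lemma alph_label: "d \<in> darts D \<Longrightarrow> dlab D (alph D d) = (fst (dlab D d), \<not> snd (dlab D d))"
  using vk by (simp add: vk_diagram_def)

lemma alph_darts: "d \<in> darts D \<Longrightarrow> alph D d \<in> darts D"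
  using planar by (simp add: planar_map_def)

lemma fan_triangle:
  assumes "k \<in> {1..m-2}"
  shows "phi D (fan_in k) = b (k+1)" "phi D (b (k+1)) = fan_out k" "phi D (fan_out k) = fan_in k"
    and "f k = {fan_in k, b (k+1), fan_out k}" "card {fan_in k, b (k+1), fan_out k} = 3"
proof -
  have "card (f k) = 3" "f k = dorb (phi D) (fan_in k)" and phis:
    "phi D (fan_in k) = b (k+1)" "phi D (b (k+1)) = fan_out k" "phi D (fan_out k) = fan_in k"
    using fan assms unfolding fan_in_def fan_out_def Let_def by blast+
  moreover have "f k = {fan_in k, b (k+1), fan_out k}"
    using calculation(2) triangle_dorb[OF phis] by simp
  ultimately show "phi D (fan_in k) = b (k+1)" "phi D (b (k+1)) = fan_out k"
    "phi D (fan_out k) = fan_in k" "f k = {fan_in k, b (k+1), fan_out k}"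
    "card {fan_in k, b (k+1), fan_out k} = 3"
    by simp_all
qed

lemma triangle_in_C: "k \<in> {1..m-2} \<Longrightarrow> f k \<in> C"
  using C_eq by blast

lemma card_C: "card C = m - 2"
  using C_eq card_image[OF f_inj] by simp

lemma cluster_cell_reads:
  assumes "c \<in> C"
  obtains as where "set as \<subseteq> tcarrier G Ss rho i" "tprod G Ss rho i as = tclass G Ss rho i []"
    "reads D c (map (HL i) as)"
proof -
  obtain r where r: "r \<in> HRel G Ss rho i" "reads D c r"
    using C_htype assms unfolding htype_def by blast
  then obtain as where "r = map (HL i) as" "set as \<subseteq> tcarrier G Ss rho i"
    "tprod G Ss rho i as = tclass G Ss rho i []"
    unfolding HRel_def by blast
  then show ?thesis
    using r(2) by (intro that) simp_all
qed

lemma cluster_letter: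
  assumes c: "c \<in> C" and d: "d \<in> c"
  obtains a where "fst (dlab D d) = HL i a" "a \<in> tcarrier G Ss rho i"
proof -
  obtain as where as: "set as \<subseteq> tcarrier G Ss rho i" "reads D c (map (HL i) as)"
    by (rule cluster_cell_reads[OF c])
  have cell: "c \<in> cells D"
    using c C_cells by blast
  obtain s where "\<forall>d\<in>c. snd (dlab D d) = s \<and> fst (dlab D d) \<in> set (map (HL i) as)"
    by (rule cell_labels[OF planar cell as(2)])
  then obtain a where "a \<in> set as" "fst (dlab D d) = HL i a"
    using d by auto
  then show ?thesis
    using as(1) by (intro that) auto
qed

lemma cluster_hval:
  assumes "c \<in> C" "d \<in> c"
  shows "hval D d \<in> tcarrier G Ss rho i" and "cx (fst (dlab D d)) = tlen (hval D d)"
proof -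
  obtain a where a: "fst (dlab D d) = HL i a" "a \<in> tcarrier G Ss rho i"
    using cluster_letter[OF assms] .
  then show "hval D d \<in> tcarrier G Ss rho i"
    using inv_sw_image_quotient[of a] unfolding hval_def tinv_def tcarrier_eq by simp
  show "cx (fst (dlab D d)) = tlen (hval D d)"
    using a by (simp add: hval_def cx_def tinv_def tlen_inv_sw_image)
qed

lemma cluster_no_edge_twice:
  assumes c: "c \<in> C" and d: "d \<in> c" shows "alph D d \<notin> c"
proof -
  obtain as where as: "reads D c (map (HL i) as)"
    using cluster_cell_reads[OF c] by blast
  have cell: "c \<in> cells D"
    using c C_cells by blast
  have "d \<in> darts D"
    using cell_subset_darts[OF planar cell] d by blast
  then have "dlab D (alph D d) = (fst (dlab D d), \<not> snd (dlab D d))"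
    by (rule alph_label)
  then show ?thesis
    using cell_not_both_darts[OF planar cell as] d by blast
qed

definition triangle_of where "triangle_of k = (if k = 1 then 1 else if k = m then m - 2 else k - 1)"

lemma triangle_of_mem:
  assumes k: "k \<in> {1..m}" shows "triangle_of k \<in> {1..m-2} \<and> b k \<in> f (triangle_of k)"
proof -
  consider "k = 1" | "k \<noteq> 1" "k = m" | "k \<noteq> 1" "k \<noteq> m"
    by blast
  then show ?thesis
  proof cases
    case 1
    have "1 \<in> {1..m-2}" "triangle_of k = 1" "fan_in 1 = b k"
      using m3 1 by (auto simp: triangle_of_def fan_in_def)
    then show ?thesis
      using fan_triangle(4)[of 1] by simp
  next
    case 2
    have "m - 2 \<in> {1..m-2}" "triangle_of k = m - 2" "fan_out (m - 2) = b k"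
      using m3 2 by (auto simp: triangle_of_def fan_out_def)
    then show ?thesis
      using fan_triangle(4)[of "m - 2"] by simp
  next
    case 3
    have "k - 1 \<in> {1..m-2}" "triangle_of k = k - 1" "k - 1 + 1 = k"
      using k 3 by (auto simp: triangle_of_def)
    then show ?thesis
      using fan_triangle(4)[of "k - 1"] by simp
  qed
qed

lemma triangles_disjoint:
  assumes k: "k \<in> {1..m-2}" and k': "k' \<in> {1..m-2}" and d: "d \<in> f k" "d \<in> f k'"
  shows "k = k'"
proof -
  have "f k \<in> dfaces D" "f k' \<in> dfaces D"
    using triangle_in_C[OF k] triangle_in_C[OF k'] C_cells by (auto simp: cells_def)
  then have "f k = dorb (phi D) d" "f k' = dorb (phi D) d"
    using face_eq_dorb[OF planar] d by blast+
  then show ?thesis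
    using inj_onD[OF f_inj _ k k'] by simp
qed

lemma boundary_dart_in_cluster:
  assumes "k \<in> {1..m}" shows "f (triangle_of k) \<in> C" "b k \<in> f (triangle_of k)"
  using triangle_of_mem[OF assms] triangle_in_C by auto

lemma boundary_edge_in_bdC: "k \<in> {1..m} \<Longrightarrow> {b k, alph D (b k)} \<in> bdC D C"
  using boundary by blast

lemma boundary_edge_cell:
  assumes k: "k \<in> {1..m}" and c: "c \<in> C" and meet: "{b k, alph D (b k)} \<inter> c \<noteq> {}"
  shows "c = f (triangle_of k)"
proof -
  have one: "card {c \<in> C. {b k, alph D (b k)} \<inter> c \<noteq> {}} = 1"
    using boundary_edge_in_bdC[OF k] unfolding bdC_def by blast
  have "f (triangle_of k) \<in> {c \<in> C. {b k, alph D (b k)} \<inter> c \<noteq> {}}"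
    using boundary_dart_in_cluster[OF k] by auto
  moreover have "c \<in> {c \<in> C. {b k, alph D (b k)} \<inter> c \<noteq> {}}"
    using c meet by blast
  ultimately show ?thesis
    using one by (metis card_1_singletonE singletonD)
qed

lemma triangle_darts_distinct:
  assumes "k \<in> {1..m-2}"
  shows "fan_in k \<noteq> b (k+1)" "b (k+1) \<noteq> fan_out k" "fan_in k \<noteq> fan_out k"
  using fan_triangle(5)[OF assms] by (auto simp: card_insert_if split: if_splits)

lemma b_inj_less:
  assumes k: "k \<in> {1..m}" and k': "k' \<in> {1..m}" and less: "k < k'" shows "b k \<noteq> b k'"
proof
  assume eq: "b k = b k'"
  have "b k \<in> f (triangle_of k)" "b k \<in> f (triangle_of k')"
    using triangle_of_mem[OF k] triangle_of_mem[OF k'] eq by auto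
  then have "triangle_of k = triangle_of k'"
    using triangles_disjoint triangle_of_mem[OF k] triangle_of_mem[OF k'] by blast
  then consider "k = 1" "k' = 2" | "k = 1" "k' = m" "m - 2 = 1" | "k = m - 1" "k' = m"
    using k k' less m3 unfolding triangle_of_def by (auto split: if_splits)
  then show False
  proof cases
    case 1
    then show ?thesis
      using eq triangle_darts_distinct(1)[of 1] m3 by (simp add: fan_in_def numeral_2_eq_2, linarith)
  next
    case 2
    then have "fan_in 1 = b k" "fan_out 1 = b k'"
      by (simp_all add: fan_in_def fan_out_def)
    moreover have "1 \<in> {1..m-2}"
      using m3 by simp
    ultimately show ?thesis
      using eq triangle_darts_distinct(3)[of 1] by simp
  next
    case 3
    then have "m - 2 + 1 = k"
      using m3 by simp
    moreover have "m - 2 \<in> {1..m-2}"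
      using m3 by simp
    ultimately show ?thesis
      using eq 3 triangle_darts_distinct(2)[of "m - 2"] by (simp add: fan_out_def)
  qed
qed

lemma b_inj:
  assumes "k \<in> {1..m}" "k' \<in> {1..m}" "b k = b k'" shows "k = k'"
proof (rule ccontr)
  assume "k \<noteq> k'"
  then consider "k < k'" | "k' < k"
    by linarith
  then show False
    using b_inj_less assms by cases metis+
qed

lemma neighbour_not_htype:
  assumes k: "k \<in> {1..m}" and c': "c' \<in> cells D" "alph D (b k) \<in> c'"
  shows "\<not> htype G Ss rho D i c'"
proof
  assume h: "htype G Ss rho D i c'"
  note c = boundary_dart_in_cluster[OF k]
  have "b k \<in> darts D"
    using b_darts k by blast
  then have edge: "{b k, alph D (b k)} \<in> dedges D"
    by (rule edge_in_dedges)
  have meet: "{b k, alph D (b k)} \<inter> f (triangle_of k) \<noteq> {}" "{b k, alph D (b k)} \<inter> c' \<noteq> {}"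
    using c(2) c'(2) by auto
  have "\<exists>e\<in>dedges D. e \<inter> f (triangle_of k) \<noteq> {} \<and> e \<inter> c' \<noteq> {}"
    using edge meet by (intro bexI[where x = "{b k, alph D (b k)}"] conjI)
  moreover have "f (triangle_of k) \<in> cells D" "htype G Ss rho D i (f (triangle_of k))"
    using c(1) C_cells C_htype by blast+
  ultimately have "(f (triangle_of k), c') \<in> cadj G Ss rho D i"
    unfolding cadj_def using c'(1) h by simp
  then have "c' \<in> C"
    using C_closed c(1) by blast
  then have "c' = f (triangle_of k)"
    by (rule boundary_edge_cell[OF k _ meet(2)])
  then show False
    using cluster_no_edge_twice[OF c] c'(2) by simp
qed

lemma cell_beyond_inner_edge:
  assumes k: "k \<in> {1..m}" and inner: "{b k, alph D (b k)} \<notin> bdD D"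
  shows "dorb (phi D) (alph D (b k)) \<in> cells D"
proof -
  have bk: "b k \<in> darts D"
    using b_darts k by blast
  then have "{b k, alph D (b k)} \<inter> outer D = {}"
    using inner edge_in_dedges[OF bk] unfolding bdD_def by simp
  then have "alph D (b k) \<notin> outer D"
    by auto
  then have "dorb (phi D) (alph D (b k)) \<noteq> outer D"
    using dorb_self by metis
  moreover have "dorb (phi D) (alph D (b k)) \<in> dfaces D"
    unfolding dfaces_def using alph_darts[OF bk] by auto
  ultimately show ?thesis
    unfolding cells_def by simp
qed

text \<open>The cell beyond an inner boundary edge cannot be of type \<open>\<tilde>H_i\<close> (it would belong to the
  cluster), so it reads a relator of \<open>\<R>'\<close>, all of whose letters have complexity at most 1.\<close>
lemma inner_boundary_letter_short:
  assumes k: "k \<in> {1..m}" and inner: "{b k, alph D (b k)} \<notin> bdD D"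
  shows "tlen (hval D (b k)) \<le> 1"
proof -
  define c' where "c' = dorb (phi D) (alph D (b k))"
  have c': "c' \<in> cells D" "alph D (b k) \<in> c'"
    unfolding c'_def using cell_beyond_inner_edge[OF k inner] dorb_self by auto
  obtain r where r: "r \<in> XRel G R Ss rho n" "reads D c' r"
    using vk c'(1) unfolding vk_diagram_def by blast
  obtain a where a: "fst (dlab D (b k)) = HL i a"
    using cluster_letter[OF boundary_dart_in_cluster[OF k]] by blast
  have "fst (dlab D (alph D (b k))) = HL i a"
    using alph_label b_darts k a by simp
  moreover obtain s where "\<forall>d\<in>c'. snd (dlab D d) = s \<and> fst (dlab D d) \<in> set r"
    by (rule cell_labels[OF planar c'(1) r(2)])
  ultimately have in_r: "HL i a \<in> set r"
    using c'(2) by auto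
  have "r \<in> Rprime G R Ss rho n"
  proof (rule ccontr)
    assume "r \<notin> Rprime G R Ss rho n"
    then obtain j where j: "r \<in> HRel G Ss rho j"
      using r(1) unfolding XRel_def by blast
    then obtain as where "r = map (HL j) as"
      unfolding HRel_def by blast
    then have "j = i"
      using in_r by auto
    then have "htype G Ss rho D i c'"
      using j r(2) unfolding htype_def by blast
    then show False
      using neighbour_not_htype[OF k c'] by blast
  qed
  then have "cx (fst (dlab D (b k))) \<le> 1"
    unfolding a by (rule cx_le_one_of_Rprime[OF _ in_r])
  then show ?thesis
    using cluster_hval(2)[OF boundary_dart_in_cluster[OF k]] by simp
qed

text \<open>Since the cluster is not complicated, two long boundary letters would sit on the same edge
  of the boundary of D, i.e. on the two darts of one edge, which cannot both lie in the cluster.\<close>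
lemma long_boundary_letters_eq:
  assumes k1: "k1 \<in> {1..m}" "\<not> tlen (hval D (b k1)) \<le> 1"
    and k2: "k2 \<in> {1..m}" "\<not> tlen (hval D (b k2)) \<le> 1"
  shows "k1 = k2"
proof (rule ccontr)
  assume neq: "k1 \<noteq> k2"
  define E1 where "E1 = {b k1, alph D (b k1)}"
  define E2 where "E2 = {b k2, alph D (b k2)}"
  have "E1 \<in> bdC D C \<inter> bdD D" "E2 \<in> bdC D C \<inter> bdD D"
    using inner_boundary_letter_short k1 k2 boundary_edge_in_bdC unfolding E1_def E2_def by blast+
  then have E: "{E1, E2} \<subseteq> bdC D C \<inter> bdD D"
    by simp
  have "E1 = E2"
  proof (rule ccontr)
    assume "E1 \<noteq> E2"
    moreover have "finite (bdC D C \<inter> bdD D)"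
      using finite_dedges[OF planar] unfolding bdD_def by auto
    ultimately have "2 \<le> card (bdC D C \<inter> bdD D)"
      using card_mono[OF _ E] by simp
    then show False
      using not_complicated unfolding complicated_def by simp
  qed
  then have "b k2 = b k1 \<or> b k2 = alph D (b k1)"
    unfolding E1_def E2_def by (metis insertCI insertE singletonD)
  moreover have "b k2 \<noteq> b k1"
    using b_inj k1(1) k2(1) neq by blast
  ultimately have b2: "b k2 = alph D (b k1)"
    by simp
  have "{b k1, alph D (b k1)} \<inter> f (triangle_of k2) \<noteq> {}"
    using boundary_dart_in_cluster(2)[OF k2(1)] b2 by auto
  then have "f (triangle_of k2) = f (triangle_of k1)"
    by (rule boundary_edge_cell[OF k1(1) boundary_dart_in_cluster(1)[OF k2(1)]])
  then show False
    using cluster_no_edge_twice[OF boundary_dart_in_cluster[OF k1(1)]]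
      boundary_dart_in_cluster(2)[OF k2(1)] b2 by simp
qed

lemma long_boundary_letter_unique:
  obtains k0 where "k0 \<in> {1..m}" "\<forall>k\<in>{1..m}. k \<noteq> k0 \<longrightarrow> tlen (hval D (b k)) \<le> 1"
proof (cases "\<forall>k\<in>{1..m}. tlen (hval D (b k)) \<le> 1")
  case True
  then show ?thesis
    using that[of 1] m3 by simp
next
  case False
  then obtain k1 where "k1 \<in> {1..m}" "\<not> tlen (hval D (b k1)) \<le> 1"
    by blast
  then show ?thesis
    using that long_boundary_letters_eq by blast
qed

lemma boundary_hval:
  assumes "k \<in> {1..m}"
  shows "hval D (b k) \<in> tcarrier G Ss rho i" "cx (fst (dlab D (b k))) = tlen (hval D (b k))"
  using cluster_hval[OF boundary_dart_in_cluster[OF assms]] by simp_all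

lemma triangle_product_trivial:
  assumes k: "k \<in> {1..m-2}"
    and uvw: "u \<in> hval D (fan_in k)" "v \<in> hval D (b (k+1))" "w \<in> hval D (fan_out k)"
  shows "(u @ v @ w, []) \<in> tEq G Ss rho i"
proof -
  let ?x = "fan_in k" and ?y = "b (k+1)" and ?z = "fan_out k"
  note ph = fan_triangle(1-3)[OF k]
  have card: "card {?x, ?y, ?z} = 3" "card {?y, ?z, ?x} = 3" "card {?z, ?x, ?y} = 3"
    using fan_triangle(5)[OF k] by (simp_all add: insert_commute)
  obtain as where as: "set as \<subseteq> tcarrier G Ss rho i" "tprod G Ss rho i as = tclass G Ss rho i []"
    "reads D (f k) (map (HL i) as)"
    by (rule cluster_cell_reads[OF triangle_in_C[OF k]])
  let ?reads = "\<lambda>d. fword D d = pos_word (map (HL i) as) \<or>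
                     fword D d = inv_sw (pos_word (map (HL i) as))"
  have "\<exists>d\<in>{?x, ?y, ?z}. ?reads d"
    using as(3) fan_triangle(4)[OF k] unfolding reads_def by simp
  then consider "?reads ?x" | "?reads ?y" | "?reads ?z"
    by blast
  then show ?thesis
  proof cases
    case 1
    then show ?thesis
      using product_trivial_of_reading[OF _ as(1,2) uvw] triangle_fword[OF ph card(1)] by simp
  next
    case 2
    then have "(v @ w @ u, []) \<in> tEq G Ss rho i"
      using product_trivial_of_reading[OF _ as(1,2) uvw(2,3,1)] triangle_fword[OF ph(2,3,1) card(2)]
      by simp
    then show ?thesis
      using pres_eq_rotate[of "v @ w" u] by (simp add: tEq_def)
  next
    case 3
    then have "(w @ u @ v, []) \<in> tEq G Ss rho i"
      using product_trivial_of_reading[OF _ as(1,2) uvw(3,1,2)] triangle_fword[OF ph(3,1,2) card(3)]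
      by simp
    then show ?thesis
      using pres_eq_rotate[of w "u @ v"] by (simp add: tEq_def)
  qed
qed

lemma diagonal_value:
  assumes j: "j \<in> {2..m-2}" and w: "\<forall>k\<in>{1..j}. w k \<in> hval D (b k)"
  shows "concat (map w [1..<j+1]) \<in> hval D (t j)"
proof -
  let ?Ys = "map (\<lambda>k. hval D (b k)) [1..<j+1]"
  have ws: "list_all2 (\<in>) (map w [1..<j+1]) ?Ys"
    using w by (intro list_all2_map_in) auto
  have Ys: "set ?Ys \<subseteq> lists (Ss i \<times> UNIV) // pres_eq (Ss i) (tRel G Ss rho i)"
    using boundary_hval(1) j by (auto simp: tcarrier_eq)
  have "hval D (t j) = pres_eq (Ss i) (tRel G Ss rho i) `` {concat (map w [1..<j+1])}"
    using diagonals j pres_eq_Image_concat[OF ws Ys] by (simp add: tprod_def tEq_def)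
  moreover have "concat (map w [1..<j+1]) \<in> lists (Ss i \<times> UNIV)"
    by (rule concat_in_lists[OF ws Ys])
  ultimately show ?thesis
    by (simp add: pres_eq_refl)
qed

lemma boundary_product_trivial:
  assumes w: "\<forall>k\<in>{1..m}. w k \<in> hval D (b k)"
  shows "(concat (map w [1..<m+1]), []) \<in> tEq G Ss rho i"
proof -
  have last: "m - 2 \<in> {1..m-2}" "m - 2 + 1 = m - 1" "fan_out (m - 2) = b m"
    using m3 by (auto simp: fan_out_def)
  have "concat (map w [1..<m-1]) \<in> hval D (fan_in (m - 2))"
  proof (cases "m = 3")
    case True
    then have "[1..<m-1] = [1]" "fan_in (m - 2) = b 1"
      by (simp_all add: fan_in_def numeral_2_eq_2)
    then show ?thesis
      using w m3 by simp
  next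
    case False
    then have j: "m - 2 \<in> {2..m-2}" and fan_in_eq: "fan_in (m - 2) = t (m - 2)"
      using m3 by (auto simp: fan_in_def)
    have "concat (map w [1..<m-2+1]) \<in> hval D (t (m - 2))"
      by (rule diagonal_value[OF j]) (use w in auto)
    then show ?thesis
      using fan_in_eq last(2) by metis
  qed
  moreover have "w (m - 1) \<in> hval D (b (m - 2 + 1))" "w m \<in> hval D (fan_out (m - 2))"
    using w last m3 by auto
  ultimately have "(concat (map w [1..<m-1]) @ w (m - 1) @ w m, []) \<in> tEq G Ss rho i"
    using triangle_product_trivial[OF last(1)] by blast
  moreover have "[1..<m+1] = [1..<m-1] @ [m - 1, m]"
    using upt_split_at[of "m - 1" m] m3 by simp
  ultimately show ?thesis
    by simp
qed

lemma short_boundary_representatives: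
  obtains w k0 where "k0 \<in> {1..m}" "\<forall>k\<in>{1..m}. w k \<in> hval D (b k)"
    "\<forall>k\<in>{1..m}. k \<noteq> k0 \<longrightarrow> length (w k) \<le> 1" "length (w k0) \<le> m - 1"
proof -
  have "\<forall>k\<in>{1..m}. \<exists>u. u \<in> hval D (b k) \<and> length u = tlen (hval D (b k))"
  proof
    fix k assume "k \<in> {1..m}"
    then have "hval D (b k) \<noteq> {}"
      using in_quotient_imp_non_empty[OF equiv_pres_eq] boundary_hval(1) unfolding tcarrier_eq
      by blast
    then show "\<exists>u. u \<in> hval D (b k) \<and> length u = tlen (hval D (b k))"
      using tlen_attained by blast
  qed
  then obtain ws where ws: "\<forall>k\<in>{1..m}. ws k \<in> hval D (b k) \<and> length (ws k) = tlen (hval D (b k))"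
    by (auto dest: bchoice)
  obtain k0 where k0: "k0 \<in> {1..m}" "\<forall>k\<in>{1..m}. k \<noteq> k0 \<longrightarrow> tlen (hval D (b k)) \<le> 1"
    by (rule long_boundary_letter_unique)
  have "(concat (map ws [1..<m+1]), []) \<in> pres_eq (Ss i) (tRel G Ss rho i)"
    using boundary_product_trivial ws by (simp add: tEq_def)
  moreover have "\<forall>k\<in>{1..m}. k \<noteq> k0 \<longrightarrow> length (ws k) \<le> 1"
    using ws k0(2) by simp
  ultimately obtain v where v: "(ws k0, v) \<in> pres_eq (Ss i) (tRel G Ss rho i)" "length v \<le> m - 1"
    using pres_eq_short_factor k0(1) by blast
  have "ws k0 \<in> hval D (b k0)"
    using ws k0(1) by blast
  then have "v \<in> hval D (b k0)"
    by (rule in_quotient_imp_closed[OF equiv_pres_eq boundary_hval(1)[OF k0(1), unfolded tcarrier_eq]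
          _ v(1)])
  show ?thesis
  proof (rule that[of k0 "ws(k0 := v)"])
    show "\<forall>k\<in>{1..m}. (ws(k0 := v)) k \<in> hval D (b k)"
      using ws \<open>v \<in> hval D (b k0)\<close> by simp
    show "\<forall>k\<in>{1..m}. k \<noteq> k0 \<longrightarrow> length ((ws(k0 := v)) k) \<le> 1"
      using ws k0(2) by simp
  qed (use k0(1) v(2) in simp_all)
qed

lemma boundary_dart_bound:
  assumes k: "k \<in> {1..m}" shows "cx (fst (dlab D (b k))) \<le> 2 * m - 3"
proof -
  obtain w k0 where "k0 \<in> {1..m}" and w: "\<forall>k\<in>{1..m}. w k \<in> hval D (b k)"
    and short: "\<forall>k\<in>{1..m}. k \<noteq> k0 \<longrightarrow> length (w k) \<le> 1" and long: "length (w k0) \<le> m - 1"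
    by (rule short_boundary_representatives)
  have "tlen (hval D (b k)) \<le> length (w k)"
    using tlen_le w k by blast
  also have "\<dots> \<le> m - 1"
    using short long k m3 by (cases "k = k0") auto
  finally show ?thesis
    using boundary_hval(2)[OF k] m3 by simp
qed

lemma diagonal_dart_bound:
  assumes j: "j \<in> {2..m-2}" shows "cx (fst (dlab D (t j))) \<le> 2 * m - 3"
proof -
  obtain w k0 where w: "\<forall>k\<in>{1..m}. w k \<in> hval D (b k)"
    and short: "\<forall>k\<in>{1..m}. k \<noteq> k0 \<longrightarrow> length (w k) \<le> 1" and long: "length (w k0) \<le> m - 1"
    by (rule short_boundary_representatives)
  have "concat (map w [1..<j+1]) \<in> hval D (t j)"
    by (rule diagonal_value[OF j]) (use w j in auto)
  then have "tlen (hval D (t j)) \<le> length (concat (map w [1..<j+1]))"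
    by (rule tlen_le)
  also have "\<dots> \<le> length [1..<j+1] + length (w k0)"
    using short j by (intro length_concat_map_le_length_add) auto
  also have "\<dots> \<le> 2 * m - 3"
    using long j m3 by (simp, linarith)
  finally have "tlen (hval D (t j)) \<le> 2 * m - 3" .
  moreover have "j \<in> {1..m-2}" "fan_in j = t j"
    using j by (auto simp: fan_in_def)
  then have "t j \<in> f j"
    using fan_triangle(4) by simp
  ultimately show ?thesis
    using cluster_hval(2)[OF triangle_in_C] \<open>j \<in> {1..m-2}\<close> by simp
qed

lemma cluster_dart_bound:
  assumes c: "c \<in> C" and d: "d \<in> c" shows "cx (fst (dlab D d)) \<le> 2 * m - 3"
proof -
  obtain k where k: "k \<in> {1..m-2}" "c = f k"
    using c C_eq by blast
  then consider "d = fan_in k" | "d = b (k+1)" | "d = fan_out k"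
    using fan_triangle(4)[OF k(1)] d by blast
  then show ?thesis
  proof cases
    case 1
    then show ?thesis
      using boundary_dart_bound[of 1] diagonal_dart_bound[of k] k(1) m3 by (auto simp: fan_in_def)
  next
    case 2
    have "k + 1 \<in> {1..m}"
      using k(1) by auto
    then show ?thesis
      using 2 boundary_dart_bound by simp
  next
    case 3
    show ?thesis
    proof (cases "k = m - 2")
      case True
      then show ?thesis
        using 3 boundary_dart_bound[of m] m3 by (simp add: fan_out_def)
    next
      case False
      then have j: "k + 1 \<in> {2..m-2}"
        using k(1) by auto
      then have "cx (fst (dlab D (alph D (t (k+1))))) = cx (fst (dlab D (t (k+1))))"
        using alph_label diagonals by simp
      then show ?thesis
        using 3 False diagonal_dart_bound[OF j] by (simp add: fan_out_def)
    qed
  qed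
qed

lemma cluster_dart_bound_area:
  assumes "c \<in> C" "d \<in> c" shows "cx (fst (dlab D d)) \<le> 6 * vk_area D"
proof -
  have "card C \<le> vk_area D"
    unfolding vk_area_def using card_mono[OF finite_cells[OF planar] C_cells] .
  then have "2 * m - 3 \<le> 6 * vk_area D"
    using card_C m3 by linarith
  then show ?thesis
    using cluster_dart_bound[OF assms] by linarith
qed

end

section \<open>The bound on the thick part\<close>

lemma cluster_of_cell:
  assumes c: "c \<in> cells D" and h: "htype G Ss rho D j c"
  defines "C \<equiv> {c'. (c, c') \<in> (cadj G Ss rho D j)\<^sup>*}"
  shows "C \<in> clusters G Ss rho D j" "c \<in> C" "C \<subseteq> cells D" "\<forall>c'\<in>C. htype G Ss rho D j c'"
    and "\<forall>c1\<in>C. \<forall>c2. (c1, c2) \<in> cadj G Ss rho D j \<longrightarrow> c2 \<in> C"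
proof -
  show "C \<in> clusters G Ss rho D j"
    unfolding clusters_def C_def using c h by blast
  show "c \<in> C"
    unfolding C_def by simp
  have "c' \<in> cells D \<and> htype G Ss rho D j c'" if "(c, c') \<in> (cadj G Ss rho D j)\<^sup>*" for c'
    using that
  proof induct
    case base
    then show ?case using c h by simp
  next
    case (step y z)
    then show ?case unfolding cadj_def by blast
  qed
  then show "C \<subseteq> cells D" "\<forall>c'\<in>C. htype G Ss rho D j c'"
    unfolding C_def by auto
  show "\<forall>c1\<in>C. \<forall>c2. (c1, c2) \<in> cadj G Ss rho D j \<longrightarrow> c2 \<in> C"
    unfolding C_def by (auto intro: rtrancl_into_rtrancl)
qed

lemma standardly_filled_standard_cluster:
  assumes "vk_diagram G S R Ss rho n D" "C \<subseteq> cells D" "\<forall>c\<in>C. htype G Ss rho D i c"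
    "\<forall>c\<in>C. \<forall>c'. (c, c') \<in> cadj G Ss rho D i \<longrightarrow> c' \<in> C" "\<not> complicated D C"
    and "standardly_filled G Ss rho D i C"
  obtains m b t f where "standard_cluster G S R Ss rho n D i C m b t f"
proof -
  from assms(6) obtain m b t f where fill: "3 \<le> m \<and> inj_on f {1..m-2} \<and> C = f ` {1..m-2} \<and>
      (\<forall>k\<in>{1..m}. b k \<in> darts D) \<and>
      (\<forall>j\<in>{2..m-2}. t j \<in> darts D \<and>
          hval D (t j) = tprod G Ss rho i (map (\<lambda>k. hval D (b k)) [1..<j+1])) \<and>
      (\<forall>k\<in>{1..m-2}.
         let ein = (if k = 1 then b 1 else t k);
             eout = (if k = m - 2 then b m else alph D (t (k+1)))
         in card (f k) = 3 \<and> f k = dorb (phi D) ein \<and>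
            phi D ein = b (k+1) \<and> phi D (b (k+1)) = eout \<and> phi D eout = ein) \<and>
      {{b k, alph D (b k)} | k. k \<in> {1..m}} = bdC D C"
    unfolding standardly_filled_def by (elim exE) (rule that)
  have "standard_cluster G S R Ss rho n D i C m b t f"
    by (rule standard_cluster.intro[OF assms(1-5)]) (insert fill, elim conjE, assumption)+
  then show ?thesis
    by (rule that)
qed

lemma cell_dart_bound:
  assumes vk: "vk_diagram G S R Ss rho n D"
    and clusters: "\<forall>i\<in>{1..n}. \<forall>C\<in>clusters G Ss rho D i.
           simply_conn D C \<and> \<not> complicated D C \<and> standardly_filled G Ss rho D i C"
    and c: "c \<in> cells D" and d: "d \<in> c"
  shows "cx (fst (dlab D d)) \<le> 6 * vk_area D"
proof -
  have pm: "planar_map D"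
    using vk by (simp add: vk_diagram_def)
  obtain r where r: "r \<in> XRel G R Ss rho n" "reads D c r"
    using vk c unfolding vk_diagram_def by blast
  show ?thesis
  proof (cases "r \<in> Rprime G R Ss rho n")
    case True
    obtain s where "\<forall>d\<in>c. snd (dlab D d) = s \<and> fst (dlab D d) \<in> set r"
      by (rule cell_labels[OF pm c r(2)])
    then have "cx (fst (dlab D d)) \<le> 1"
      using cx_le_one_of_Rprime[OF True] d by blast
    moreover have "cells D \<noteq> {}"
      using c by blast
    then have "1 \<le> vk_area D"
      unfolding vk_area_def using finite_cells[OF pm] by (simp add: Suc_le_eq card_gt_0_iff)
    ultimately show ?thesis
      by linarith
  next
    case False
    then obtain j where j: "j \<in> {1..n}" "r \<in> HRel G Ss rho j"
      using r(1) unfolding XRel_def by blast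
    then have h: "htype G Ss rho D j c"
      unfolding htype_def using r(2) by blast
    define C where "C = {c'. (c, c') \<in> (cadj G Ss rho D j)\<^sup>*}"
    note C = cluster_of_cell[OF c h, folded C_def]
    have "\<not> complicated D C" "standardly_filled G Ss rho D j C"
      using clusters j(1) C(1) by blast+
    then obtain m b t f where "standard_cluster G S R Ss rho n D j C m b t f"
      using standardly_filled_standard_cluster[OF vk C(3-5)] by blast
    then show ?thesis
      by (rule standard_cluster.cluster_dart_bound_area[OF _ C(2) d])
  qed
qed

theorem lemma2p6:
  fixes G :: "('g, 'b) monoid_scheme" and S :: "'g set" and R :: "'g list set"
    and n :: nat and Ss :: "nat \<Rightarrow> 'g set" and H :: "nat \<Rightarrow> 'g set" and rho :: enat
    and D :: "('d, 'g) vkdiag"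
  assumes "finite_presentation G S R"
    and "\<forall>i\<in>{1..n}. subgroup (H i) G \<and> Ss i \<subseteq> S \<and> finite (Ss i) \<and> sym_subset G (Ss i)
                    \<and> generate G (Ss i) = H i"
    and "vk_diagram G S R Ss rho n D"
    and "\<forall>i\<in>{1..n}. \<forall>C\<in>clusters G Ss rho D i.
           simply_conn D C \<and> \<not> complicated D C \<and> standardly_filled G Ss rho D i C"
  shows "thick_norm D \<le> 6 * vk_area D"
proof -
  let ?thick = "{cx (fst (dlab D d)) | d. d \<in> darts D \<and> {d, alph D d} \<inter> \<Union>(cells D) \<noteq> {}}"
  have "finite ?thick"
    using assms(3) by (simp add: vk_diagram_def planar_map_def)
  moreover have "x \<le> 6 * vk_area D" if x: "x \<in> ?thick" for x
  proof -
    obtain d c e where "x = cx (fst (dlab D d))" "d \<in> darts D" "c \<in> cells D" "e \<in> c"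
      "e = d \<or> e = alph D d"
      using x by blast
    moreover have "fst (dlab D (alph D d)) = fst (dlab D d)"
      using assms(3) calculation(2) by (simp add: vk_diagram_def)
    ultimately show ?thesis
      using cell_dart_bound[OF assms(3,4)] by metis
  qed
  ultimately show ?thesis
    unfolding thick_norm_def by (intro Max.boundedI) auto
qed

end
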